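(* Let $A=(a_i)_{i\ge1}$ be a weakly increasing multisubset of $\mathbb{N}$ such that $\underline{d}(A^{\#})=1$, and let $\epsilon>0$. Then for all sufficiently large integers $h$ (depending on $\epsilon$ and $A$) there exist an integer $n$ and a set $\mathscr{J}\subseteq A^{\#}\cap[a_n,(1+\epsilon)a_n]$ such that \[ h=\sum_{i=1}^{n}a_i+\sum_{x\in\mathscr{J}}x, \] where $n$ depends on $h$ and $n\to\infty$ as $h\to\infty$.
   Context: A multisubset $A$ of $\mathbb{N}$ (positive integers) is a collection of positive integers with repetitions allowed, each integer occurring only finitely often; writing $A=(a_i)$ means $a_1\le a_2\le\cdots$ lists the elements of $A$ (with multiplicity) in non-decreasing order. $A$ is weakly increasing if for each $\epsilon>0$ there is $\delta>0$ such that $a_{\lfloor(1+\epsilon)n\rfloor}/a_n>1+\delta$ for all sufficiently large $n$ (depending on $\epsilon$). $A^{\#}\subseteq\mathbb{N}$ is the set of integers appearing at least once in $A$. For $X\subseteq\mathbb{N}$, the lower asymptotic density is $\underline{d}(X)=\liminf_{n\to\infty}|X\cap[1,n]|/n$. *)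

theory Defs
  imports "HOL-Analysis.Analysis"
begin

text \<open>A multisubset A of positive integers, listed (1-indexed) in non-decreasing
order as a 1, a 2, ...; each value occurs only finitely often. The value a 0 is irrelevant.\<close>
definition multiset_seq :: "(nat \<Rightarrow> nat) \<Rightarrow> bool" where
  "multiset_seq a \<longleftrightarrow> (\<forall>i\<ge>1. a i > 0) \<and> (\<forall>i\<ge>1. a i \<le> a (Suc i))
     \<and> (\<forall>x. finite {i. i \<ge> 1 \<and> a i = x})"

definition weakly_increasing :: "(nat \<Rightarrow> nat) \<Rightarrow> bool" where
  "weakly_increasing a \<longleftrightarrow> (\<forall>\<epsilon>::real>0. \<exists>\<delta>::real>0. \<forall>\<^sub>F n in sequentially.
      real (a (nat \<lfloor>(1 + \<epsilon>) * real n\<rfloor>)) / real (a n) > 1 + \<delta>)"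

definition Asharp :: "(nat \<Rightarrow> nat) \<Rightarrow> nat set" where
  "Asharp a = {a i | i. i \<ge> 1}"

definition lower_density :: "nat set \<Rightarrow> ereal" where
  "lower_density X = liminf (\<lambda>n. ereal (real (card (X \<inter> {1..n})) / real n))"

end

theory Submission
  imports Defs
begin

text \<open>Write \<open>S n = a 1 + \<dots> + a n\<close> and pick \<open>n\<close> with \<open>S n \<le> h < S (n + 1)\<close>. Dropping the last
  \<open>k + 1\<close> terms (\<open>k = 4r + 2\<close>, \<open>r > 1/\<epsilon>\<close>) leaves \<open>T = h - S N\<close> with \<open>N = n - k - 1\<close> and
  \<open>(k + 1) a N \<le> T < (k + 2) a (n + 1)\<close>. Since \<open>A#\<close> has density one, the run \<open>a N, \<dots>, a (n + 1)\<close>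
  skips few integers, so \<open>a (n + 1) = a N + o(a N)\<close> and \<open>T\<close> lies well inside the range of sums of
  \<open>k\<close> distinct elements of \<open>A# \<inter> [a N, a N + a N div r]\<close>. Every integer of that range is such a
  sum, because only \<open>o(a N)\<close> integers of the window are missing from \<open>A#\<close>.\<close>

lemma interval_meets_set:
  fixes B :: "nat set"
  assumes miss: "card ({m..M} - B) \<le> e" and "m \<le> u" "u + e \<le> M"
  shows "\<exists>y\<in>B. u \<le> y \<and> y \<le> u + e"
proof (rule ccontr)
  assume "\<not> ?thesis"
  hence "{u..u + e} \<subseteq> {m..M} - B" using assms(2,3) by auto
  hence "card {u..u + e} \<le> card ({m..M} - B)" by (intro card_mono) auto
  thus False using miss by simp
qed

lemma exists_spread_subset:
  fixes B :: "nat set"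
  assumes miss: "card ({m..M} - B) \<le> e" and "m \<le> v" "v + j * (e + 1) \<le> M"
  shows "\<exists>J \<subseteq> B \<inter> {v..<v + j * (e + 1)}. card J = j"
  using assms(3)
proof (induction j)
  case 0
  show ?case by simp
next
  case (Suc j)
  then obtain J where J: "J \<subseteq> B \<inter> {v..<v + j * (e + 1)}" "card J = j" by auto
  obtain y where y: "y \<in> B" "v + j * (e + 1) \<le> y" "y \<le> v + j * (e + 1) + e"
    using interval_meets_set[OF miss, of "v + j * (e + 1)"] assms(2) Suc.prems by auto
  have "y \<notin> J" "finite J" using J(1) y(2) finite_subset[OF J(1)] by auto
  hence "card (insert y J) = Suc j" using J(2) by simp
  moreover have "insert y J \<subseteq> B \<inter> {v..<v + Suc j * (e + 1)}" using J(1) y by auto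
  ultimately show ?case by blast
qed

lemma exists_pair_summing_into_set:
  fixes B X :: "nat set"
  assumes miss: "card ({m..M} - B) \<le> e" and "finite X" "2 * e < card X"
    and X: "\<And>x. x \<in> X \<Longrightarrow> x \<le> R \<and> x \<in> {m..M} \<and> R - x \<in> {m..M}"
  shows "\<exists>x\<in>X. x \<in> B \<and> R - x \<in> B"
proof -
  have missing: "card Y \<le> e" if "Y \<subseteq> {m..M} - B" for Y
    using card_mono[OF _ that] miss by simp
  define bad1 where "bad1 = X - B"
  define bad2 where "bad2 = {x\<in>X. R - x \<notin> B}"
  have card1: "card bad1 \<le> e" by (rule missing) (use X in \<open>auto simp: bad1_def\<close>)
  have "inj_on (\<lambda>x. R - x) bad2"
  proof (rule inj_onI)
    fix x y assume "x \<in> bad2" "y \<in> bad2" "R - x = R - y"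
    thus "x = y" using X[of x] X[of y] unfolding bad2_def by auto
  qed
  moreover have "card ((\<lambda>x. R - x) ` bad2) \<le> e" by (rule missing) (use X in \<open>auto simp: bad2_def\<close>)
  ultimately have card2: "card bad2 \<le> e" by (simp add: card_image)
  have "card (bad1 \<union> bad2) \<le> 2 * e" using card_Un_le[of bad1 bad2] card1 card2 by simp
  moreover have "bad1 \<union> bad2 \<subseteq> X" unfolding bad1_def bad2_def by auto
  ultimately have "bad1 \<union> bad2 \<noteq> X" using assms(3) by auto
  thus ?thesis unfolding bad1_def bad2_def by auto
qed

lemma sum_bounds_by_card:
  fixes J :: "nat set"
  assumes "\<And>x. x \<in> J \<Longrightarrow> v \<le> x \<and> x \<le> w"
  shows "card J * v \<le> (\<Sum>x\<in>J. x)" "(\<Sum>x\<in>J. x) \<le> card J * w"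
  using sum_bounded_below[of J v "\<lambda>x. x"] sum_bounded_above[of J "\<lambda>x. x" w] assms by simp_all

text \<open>The \<open>j\<close> elements of \<open>J0\<close>, one from each window of length \<open>e + 1\<close> above \<open>v\<close>, account for
  about \<open>j v\<close>; the rest \<open>R\<close> of \<open>T\<close> is split as \<open>x + (R - x)\<close>, and the \<open>2e + 1\<close> candidates
  \<open>x < v\<close> cannot all fail since each failure uses up a missing value.\<close>
lemma exists_subset_with_sum:
  fixes B :: "nat set" and e j :: nat
  defines "D \<equiv> (j + 1) * j * (e + 1) + 2 * e + j + 2"
  assumes miss: "card ({m..M} - B) \<le> e" and "0 < j" and v: "m + D \<le> v" "v + D \<le> M"
    and T: "(j + 2) * v \<le> T" "T < (j + 2) * (v + 1)"
  shows "\<exists>J \<subseteq> B \<inter> {m..M}. (\<Sum>x\<in>J. x) = T"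
proof -
  define W where "W = v + j * (e + 1)"
  define Z where "Z = (j + 1) * j * (e + 1)"
  have Z: "Z = j * (j * (e + 1)) + j * (e + 1)" "1 \<le> j * (e + 1)"
    using \<open>0 < j\<close> by (simp_all add: Z_def algebra_simps)
  have arith: "(j + 2) * v = j * v + 2 * v" "(j + 2) * (v + 1) = j * v + 2 * v + j + 2"
    "j * W = j * v + j * (j * (e + 1))" "D = Z + 2 * e + j + 2"
    by (simp_all add: W_def Z_def D_def algebra_simps)
  have "m \<le> v" using v(1) by simp
  have "W \<le> M" using v(2) Z(1) arith(4) unfolding W_def by simp
  from exists_spread_subset[OF miss \<open>m \<le> v\<close> this[unfolded W_def]]
  obtain J0 where J0: "J0 \<subseteq> B \<inter> {v..<W}" "card J0 = j" unfolding W_def by blast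
  define S0 where "S0 = (\<Sum>x\<in>J0. x)"
  have S0: "j * v \<le> S0" "S0 \<le> j * W"
    unfolding S0_def J0(2)[symmetric] by (rule sum_bounds_by_card[of J0 v W]; use J0(1) in auto)+
  define u where "u = v - (Z + 2 * e)"
  have u: "v = u + Z + 2 * e" "m \<le> u" using v(1) arith unfolding u_def by linarith+
  have X: "S0 + x + W \<le> T \<and> T \<le> S0 + x + M \<and> x \<in> {m..M}" if "x \<in> {u..u + 2 * e}" for x
  proof -
    have "u \<le> x" "x \<le> u + 2 * e" using that by simp_all
    hence "S0 + x + W \<le> T" "T < S0 + x + (v + D)"
      using u(1) S0 T Z arith unfolding W_def by linarith+
    moreover have "m \<le> x" "x \<le> M" using \<open>u \<le> x\<close> \<open>x \<le> u + 2 * e\<close> u v(2) by simp_all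
    ultimately show ?thesis using v(2) by simp
  qed
  have "\<exists>x\<in>{u..u + 2 * e}. x \<in> B \<and> T - S0 - x \<in> B"
  proof (rule exists_pair_summing_into_set[OF miss finite_atLeastAtMost])
    fix x assume "x \<in> {u..u + 2 * e}"
    with X[OF this] \<open>m \<le> v\<close> show "x \<le> T - S0 \<and> x \<in> {m..M} \<and> T - S0 - x \<in> {m..M}"
      unfolding W_def by auto
  qed simp
  then obtain x where x: "x \<in> {u..u + 2 * e}" "x \<in> B" "T - S0 - x \<in> B" by blast
  define y where "y = T - S0 - x"
  have "x < v" using x(1) u(1) Z by simp
  have y: "y \<in> {W..M}" "x + y + S0 = T" using X[OF x(1)] unfolding y_def by auto
  have "x \<notin> insert y J0" "y \<notin> J0" using \<open>x < v\<close> y(1) J0(1) unfolding W_def by auto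
  moreover have "finite J0" using J0(1) finite_subset by blast
  ultimately have "(\<Sum>z\<in>insert x (insert y J0). z) = T"
    using y(2) unfolding S0_def by simp
  moreover have "insert x (insert y J0) \<subseteq> B \<inter> {m..M}"
    using J0(1) x(2,3) X[OF x(1)] y(1) \<open>m \<le> v\<close> unfolding y_def W_def by auto
  ultimately show ?thesis by blast
qed

lemma multiset_seq_mono:
  assumes "multiset_seq a" "1 \<le> i" "i \<le> j"
  shows "a i \<le> a j"
  using assms(3)
proof (induction j rule: dec_induct)
  case (step n)
  then show ?case using assms(1,2) unfolding multiset_seq_def by (meson le_trans order.trans)
qed simp

lemma multiset_seq_eventually_ge:
  assumes "multiset_seq a"
  shows "\<exists>n\<^sub>0\<ge>1. \<forall>i\<ge>n\<^sub>0. b \<le> a i"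
proof -
  have "{i. 1 \<le> i \<and> a i < b} \<subseteq> (\<Union>x<b. {i. 1 \<le> i \<and> a i = x})" by auto
  moreover have "finite (\<Union>x<b. {i. 1 \<le> i \<and> a i = x})"
    using assms unfolding multiset_seq_def by auto
  ultimately obtain n\<^sub>0 where n0: "\<And>i. 1 \<le> i \<Longrightarrow> a i < b \<Longrightarrow> i < n\<^sub>0"
    by (metis (mono_tags, lifting) finite_nat_set_iff_bounded finite_subset mem_Collect_eq)
  have "b \<le> a i" if "Suc n\<^sub>0 \<le> i" for i
    using n0[of i] that by linarith
  thus ?thesis by (intro exI[of _ "Suc n\<^sub>0"]) auto
qed

lemma lower_density_one_imp_sparse_complement:
  fixes X :: "nat set"
  assumes "lower_density X = 1" "0 < P"
  shows "\<exists>q\<^sub>0. \<forall>q\<ge>q\<^sub>0. P * card ({1..q} - X) \<le> q"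
proof -
  have "ereal (1 - 1 / real P) < liminf (\<lambda>n. ereal (real (card (X \<inter> {1..n})) / real n))"
    using assms unfolding lower_density_def by simp
  hence "\<forall>\<^sub>F n in sequentially. 1 - 1 / real P < real (card (X \<inter> {1..n})) / real n"
    by (auto dest: less_LiminfD)
  then obtain q\<^sub>0 where q0: "\<And>q. q \<ge> q\<^sub>0 \<Longrightarrow> 1 - 1 / real P < real (card (X \<inter> {1..q})) / real q"
    unfolding eventually_sequentially by auto
  have "P * card ({1..q} - X) \<le> q" if "q \<ge> Suc q\<^sub>0" for q
  proof -
    define c where "c = card (X \<inter> {1..q})"
    have "c \<le> q" using card_mono[of "{1..q}" "X \<inter> {1..q}"] unfolding c_def by simp
    moreover have "real P * (real q - real c) < real q"
      using q0[of q] that assms(2) unfolding c_def by (simp add: field_simps)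
    ultimately have "real (P * (q - c)) < real q" by (simp add: of_nat_diff)
    hence "P * (q - c) < q" by (simp only: of_nat_less_iff)
    moreover have "card ({1..q} - X) = q - c"
      unfolding c_def by (simp add: card_Diff_subset_Int Int_commute)
    ultimately show ?thesis by simp
  qed
  thus ?thesis by blast
qed

lemma multiset_seq_value_gap:
  assumes ms: "multiset_seq a" and "1 \<le> N" "N \<le> n"
  shows "a n + 1 \<le> a N + (n + 1 - N) + card ({1..a n} - Asharp a)"
proof -
  have "0 < a N" using ms assms(2) unfolding multiset_seq_def by auto
  have "{a N..a n} \<subseteq> a ` {N..n} \<union> ({1..a n} - Asharp a)"
  proof
    fix x assume x: "x \<in> {a N..a n}"
    show "x \<in> a ` {N..n} \<union> ({1..a n} - Asharp a)"
    proof (cases "x \<in> Asharp a")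
      case True
      then obtain i where i: "1 \<le> i" "x = a i" unfolding Asharp_def by auto
      have "i < N \<Longrightarrow> x = a N" "n < i \<Longrightarrow> x = a n"
        using multiset_seq_mono[OF ms] x i assms(2,3) by (simp_all add: le_antisym)
      hence "x \<in> a ` {N..n}" using i assms(3) by (cases "i < N"; cases "n < i") auto
      thus ?thesis by simp
    next
      case False
      thus ?thesis using x \<open>0 < a N\<close> by auto
    qed
  qed
  hence "card {a N..a n} \<le> card (a ` {N..n}) + card ({1..a n} - Asharp a)"
    by (meson card_Un_le card_mono finite_Diff finite_Un finite_atLeastAtMost finite_imageI order_trans)
  moreover have "card (a ` {N..n}) \<le> n + 1 - N" using card_image_le[of "{N..n}" a] by simp
  ultimately show ?thesis by simp
qed

lemma partial_sum_index:
  fixes a :: "nat \<Rightarrow> nat"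
  assumes pos: "\<And>i. 1 \<le> i \<Longrightarrow> 0 < a i"
  obtains \<nu> where "\<And>h. (\<Sum>i=1..\<nu> h. a i) \<le> h \<and> h < (\<Sum>i=1..Suc (\<nu> h). a i)"
    and "\<And>h n. (\<Sum>i=1..n. a i) \<le> h \<Longrightarrow> n \<le> \<nu> h"
proof
  define S where "S n = (\<Sum>i=1..n. a i)" for n
  have "n \<le> S n" for n
    using sum_mono[of "{1..n}" "\<lambda>_. 1 :: nat" a] pos unfolding S_def by (simp add: Suc_le_eq)
  hence ex: "\<exists>n. h < S (Suc n)" for h by (meson Suc_le_lessD)
  define \<nu> where "\<nu> h = (LEAST n. h < S (Suc n))" for h
  have upper: "h < S (Suc (\<nu> h))" for h unfolding \<nu>_def by (rule LeastI_ex[OF ex])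
  have lower: "S (\<nu> h) \<le> h" for h
  proof (cases "\<nu> h")
    case (Suc p)
    hence "\<not> h < S (Suc p)" unfolding \<nu>_def by (metis lessI not_less_Least)
    thus ?thesis using Suc by simp
  qed (simp add: S_def)
  show "S (\<nu> h) \<le> h \<and> h < S (Suc (\<nu> h))" for h using upper lower by simp
  show "n \<le> \<nu> h" if "S n \<le> h" for h n
  proof (rule ccontr)
    assume "\<not> n \<le> \<nu> h"
    hence "S (Suc (\<nu> h)) \<le> S n" unfolding S_def by (intro sum_mono2) auto
    thus False using upper[of h] that by simp
  qed
qed

lemma partial_sum_block_bounds:
  assumes ms: "multiset_seq a" and "1 \<le> N"
    and h: "(\<Sum>i=1..N + p. a i) \<le> h" "h < (\<Sum>i=1..N + Suc p. a i)"
  shows "(\<Sum>i=1..N. a i) \<le> h" "p * a N \<le> h - (\<Sum>i=1..N. a i)"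
    "h - (\<Sum>i=1..N. a i) < Suc p * a (N + Suc p)"
proof -
  have split: "(\<Sum>i=1..N + q. a i) = (\<Sum>i=1..N. a i) + (\<Sum>i=N+1..N + q. a i)" for q
    by (rule sum.ub_add_nat) simp
  have "p * a N \<le> (\<Sum>i=N+1..N + p. a i)"
    using sum_bounded_below[of "{N+1..N + p}" "a N" a] multiset_seq_mono[OF ms \<open>1 \<le> N\<close>] by simp
  moreover have "(\<Sum>i=N+1..N + Suc p. a i) \<le> Suc p * a (N + Suc p)"
    using sum_bounded_above[of "{N+1..N + Suc p}" a "a (N + Suc p)"] multiset_seq_mono[OF ms] assms(2)
    by simp
  ultimately show "(\<Sum>i=1..N. a i) \<le> h" "p * a N \<le> h - (\<Sum>i=1..N. a i)"
    "h - (\<Sum>i=1..N. a i) < Suc p * a (N + Suc p)"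
    using h split[of p] split[of "Suc p"] by linarith+
qed

text \<open>\<open>T\<close> exceeds \<open>k m\<close> by between \<open>m\<close> and about \<open>2m\<close>, whereas \<open>k\<close> summands from
  \<open>[m, m + m div r]\<close> reach up to about \<open>k m + 4m\<close>; the weight \<open>P\<close> keeps the numbers \<open>e\<close>, \<open>f\<close> of
  missing values small against \<open>m\<close>.\<close>
lemma block_slack:
  fixes r m e f an T k :: nat
  defines "k \<equiv> 4 * r + 2" and "P \<equiv> 8 * k * (k * k + 2) + 4 * k + 9"
    and "D \<equiv> (4 * r + 1) * (4 * r) * (e + 1) + 2 * e + 4 * r + 2"
  assumes "1 \<le> r" "P \<le> m" and e: "P * e \<le> m + m div r"
    and f: "P * f \<le> an" "an + 1 \<le> m + (k + 3) + f"
    and T: "(k + 1) * m \<le> T" "T < (k + 2) * an"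
  shows "m + D \<le> T div k" "T div k + D \<le> m + m div r"
proof -
  define c where "c = k * (k * k + 2)"
  have "6 \<le> k" using \<open>1 \<le> r\<close> unfolding k_def by simp
  have "(4 * r + 1) * (4 * r) \<le> k * k" unfolding k_def by (intro mult_le_mono) auto
  hence "D \<le> (k * k + 2) * (e + 1) + k"
    using mult_le_mono1[of "(4 * r + 1) * (4 * r)" "k * k" "e + 1"] unfolding D_def k_def
    by (simp add: algebra_simps)
  hence "k * D \<le> k * ((k * k + 2) * (e + 1) + k)" by (rule mult_le_mono2)
  also have "\<dots> = c * (e + 1) + k * k" unfolding c_def by (simp add: algebra_simps)
  finally have "k * D \<le> c * (e + 1) + k * k" .
  moreover have "8 * (c * e) \<le> 2 * m"
  proof -
    have "8 * c * e \<le> P * e" unfolding P_def c_def by (intro mult_le_mono1) simp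
    moreover have "m div r \<le> m" by (rule div_le_dividend)
    ultimately show ?thesis using e by linarith
  qed
  moreover have "k * k * 5 \<le> k * k * (4 * k)" using \<open>6 \<le> k\<close> by (intro mult_le_mono2) simp
  hence m_big: "4 * c + 4 * (k * k) + 4 * k + (k + 2) * (k + 2) + 4 * r \<le> m"
    using \<open>P \<le> m\<close> unfolding c_def P_def k_def by (simp add: algebra_simps)
  ultimately have slack_D: "2 * (k * D + k) \<le> m" by (simp add: algebra_simps)
  have "(4 * (k + 2) + 1) * f \<le> P * f" unfolding P_def by (intro mult_le_mono1) simp
  hence slack_f: "2 * ((k + 2) * f) \<le> m" using f m_big by (simp add: algebra_simps)
  define v where "v = T div k"
  have "T = k * v + T mod k" "T mod k < k"
    using mult_div_mod_eq[of k T] \<open>6 \<le> k\<close> unfolding v_def by simp_all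
  hence v: "k * v \<le> T" "T < k * v + k" by linarith+
  have "k * (m + D) \<le> k * v" using v T(1) slack_D by (simp add: algebra_simps)
  thus "m + D \<le> T div k" using \<open>6 \<le> k\<close> unfolding v_def by simp
  have "m + 1 \<le> r * (m div r) + r"
    using mult_div_mod_eq[of r m] mod_less_divisor[of r m] \<open>1 \<le> r\<close> by linarith
  hence "4 * m + 4 \<le> k * (m div r) + 4 * r" unfolding k_def by (simp add: algebra_simps)
  moreover have "(k + 2) * an \<le> (k + 2) * (m + k + 2 + f)"
    using f(2) by (intro mult_le_mono2) simp
  ultimately have "k * (v + D) \<le> k * (m + m div r)"
    using v T(2) slack_D slack_f m_big by (simp add: algebra_simps)
  thus "T div k + D \<le> m + m div r" using \<open>6 \<le> k\<close> unfolding v_def by simp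
qed

lemma block_representation:
  fixes a :: "nat \<Rightarrow> nat" and r N h k P :: nat
  defines "k \<equiv> 4 * r + 2" and "P \<equiv> 8 * k * (k * k + 2) + 4 * k + 9"
  assumes ms: "multiset_seq a" and "1 \<le> r" "1 \<le> N" and big: "P \<le> a N"
    and sparse: "\<And>q. a N \<le> q \<Longrightarrow> P * card ({1..q} - Asharp a) \<le> q"
    and h: "(\<Sum>i=1..N + (k + 1). a i) \<le> h" "h < (\<Sum>i=1..N + (k + 2). a i)"
  shows "\<exists>J \<subseteq> Asharp a \<inter> {a N..a N + a N div r}. h = (\<Sum>i=1..N. a i) + (\<Sum>x\<in>J. x)"
proof -
  define m M an T where "m = a N" and "M = m + m div r" and "an = a (N + (k + 2))"
    and "T = h - (\<Sum>i=1..N. a i)"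
  have T: "(\<Sum>i=1..N. a i) \<le> h" "(k + 1) * m \<le> T" "T < (k + 2) * an"
    using partial_sum_block_bounds[OF ms \<open>1 \<le> N\<close>, of "k + 1" h] h
    unfolding m_def an_def T_def by simp_all
  define e f where "e = card ({1..M} - Asharp a)" and "f = card ({1..an} - Asharp a)"
  have "m \<le> an" using multiset_seq_mono[OF ms \<open>1 \<le> N\<close>] unfolding m_def an_def by simp
  have "P * e \<le> M" "P * f \<le> an" using sparse \<open>m \<le> an\<close> unfolding e_def f_def M_def m_def by simp_all
  moreover have "an + 1 \<le> m + (k + 3) + f"
    using multiset_seq_value_gap[OF ms \<open>1 \<le> N\<close>, of "N + (k + 2)"] unfolding m_def an_def f_def by simp
  ultimately have v: "m + ((4 * r + 1) * (4 * r) * (e + 1) + 2 * e + 4 * r + 2) \<le> T div k"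
    "T div k + ((4 * r + 1) * (4 * r) * (e + 1) + 2 * e + 4 * r + 2) \<le> M"
    using block_slack[OF \<open>1 \<le> r\<close>, of m e f an T] big T unfolding k_def P_def M_def m_def by simp_all
  have "T mod k < k" "k * (T div k + 1) = k * (T div k) + k" unfolding k_def by simp_all
  hence "(4 * r + 2) * (T div k) \<le> T" "T < (4 * r + 2) * (T div k + 1)"
    using mult_div_mod_eq[of k T] unfolding k_def by linarith+
  moreover have "card ({m..M} - Asharp a) \<le> e"
    unfolding e_def by (rule card_mono) (use big in \<open>auto simp: P_def m_def\<close>)
  moreover have "0 < 4 * r" using \<open>1 \<le> r\<close> by simp
  ultimately obtain J where J: "J \<subseteq> Asharp a \<inter> {m..M}" "(\<Sum>x\<in>J. x) = T"
    using exists_subset_with_sum[OF _ _ v] by blast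
  have "h = (\<Sum>i=1..N. a i) + (\<Sum>x\<in>J. x)" using T(1) J(2) unfolding T_def by simp
  with J(1) show ?thesis unfolding m_def M_def by blast
qed

lemma add_div_le_mult:
  fixes m r :: nat and \<epsilon> :: real
  assumes "1 \<le> real r * \<epsilon>"
  shows "real (m + m div r) \<le> (1 + \<epsilon>) * real m"
proof -
  have "0 < real r" using assms by (cases "r = 0") simp_all
  have "r * (m div r) \<le> m" by (rule times_div_less_eq_dividend)
  hence "real r * real (m div r) \<le> real m" by (simp flip: of_nat_mult)
  also have "\<dots> \<le> real r * (\<epsilon> * real m)" using mult_right_mono[OF assms, of "real m"] by (simp add: algebra_simps)
  finally have "real (m div r) \<le> \<epsilon> * real m" using \<open>0 < real r\<close> by simp
  thus ?thesis by (simp add: algebra_simps)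
qed

lemma eventually_block_representation:
  fixes a :: "nat \<Rightarrow> nat"
  assumes ms: "multiset_seq a" and "1 \<le> r" and "lower_density (Asharp a) = 1"
  shows "\<exists>N. filterlim N at_top at_top \<and> (\<forall>\<^sub>F h in sequentially.
           \<exists>J \<subseteq> Asharp a \<inter> {a (N h)..a (N h) + a (N h) div r}. h = (\<Sum>i=1..N h. a i) + (\<Sum>x\<in>J. x))"
proof -
  define k where "k = 4 * r + 2"
  define P where "P = 8 * k * (k * k + 2) + 4 * k + 9"
  obtain q\<^sub>0 where q0: "\<And>q. q\<^sub>0 \<le> q \<Longrightarrow> P * card ({1..q} - Asharp a) \<le> q"
    using lower_density_one_imp_sparse_complement[OF assms(3), of P] unfolding P_def by auto
  obtain n\<^sub>0 where n0: "1 \<le> n\<^sub>0" "\<And>i. n\<^sub>0 \<le> i \<Longrightarrow> P + q\<^sub>0 \<le> a i"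
    using multiset_seq_eventually_ge[OF ms] by blast
  have "\<And>i. 1 \<le> i \<Longrightarrow> 0 < a i" using ms unfolding multiset_seq_def by auto
  then obtain \<nu> where \<nu>: "\<And>h. (\<Sum>i=1..\<nu> h. a i) \<le> h \<and> h < (\<Sum>i=1..Suc (\<nu> h). a i)"
    and \<nu>_ge: "\<And>h n. (\<Sum>i=1..n. a i) \<le> h \<Longrightarrow> n \<le> \<nu> h"
    using partial_sum_index by metis
  define N where "N h = \<nu> h - (k + 1)" for h
  have "filterlim N at_top at_top"
    unfolding filterlim_at_top eventually_sequentially N_def
    using \<nu>_ge by (metis add_diff_cancel_right' diff_le_mono)
  moreover have "\<exists>J \<subseteq> Asharp a \<inter> {a (N h)..a (N h) + a (N h) div r}. h = (\<Sum>i=1..N h. a i) + (\<Sum>x\<in>J. x)"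
    if "(\<Sum>i=1..n\<^sub>0 + (k + 1). a i) \<le> h" for h
  proof -
    have "n\<^sub>0 \<le> N h" "\<nu> h = N h + (k + 1)" using \<nu>_ge[OF that] unfolding N_def by auto
    moreover have "P + q\<^sub>0 \<le> a (N h)" using n0(2) calculation(1) .
    ultimately have "1 \<le> N h" "P \<le> a (N h)" "\<And>q. a (N h) \<le> q \<Longrightarrow> P * card ({1..q} - Asharp a) \<le> q"
      "(\<Sum>i=1..N h + (k + 1). a i) \<le> h" "h < (\<Sum>i=1..N h + (k + 2). a i)"
      using n0(1) q0 \<nu>[of h] by (auto simp: add.commute)
    thus ?thesis unfolding k_def P_def by (rule block_representation[OF ms \<open>1 \<le> r\<close>])
  qed
  ultimately show ?thesis unfolding eventually_sequentially by blast
qed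

theorem lemma4p2:
  fixes a :: "nat \<Rightarrow> nat" and \<epsilon> :: real
  assumes "multiset_seq a" and "weakly_increasing a"
    and "lower_density (Asharp a) = 1" and "\<epsilon> > 0"
  shows "\<exists>(N :: nat \<Rightarrow> nat) (J :: nat \<Rightarrow> nat set).
           filterlim N at_top at_top \<and>
           (\<forall>\<^sub>F h in sequentially.
              J h \<subseteq> Asharp a \<inter> {x. a (N h) \<le> x \<and> real x \<le> (1 + \<epsilon>) * real (a (N h))} \<and>
              h = (\<Sum>i=1..N h. a i) + (\<Sum>x\<in>J h. x))"
proof -
  obtain r :: nat where r_gt: "1 / \<epsilon> < real r" using reals_Archimedean2 by blast
  have "0 < 1 / \<epsilon>" using \<open>\<epsilon> > 0\<close> by simp
  hence r: "1 \<le> real r * \<epsilon>" "1 \<le> r"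
    using r_gt \<open>\<epsilon> > 0\<close> by (simp add: field_simps, linarith)
  obtain N where N: "filterlim N at_top at_top" and ev: "\<forall>\<^sub>F h in sequentially.
      \<exists>J \<subseteq> Asharp a \<inter> {a (N h)..a (N h) + a (N h) div r}. h = (\<Sum>i=1..N h. a i) + (\<Sum>x\<in>J. x)"
    using eventually_block_representation[OF assms(1) r(2) assms(3)] by blast
  define J where "J h = (SOME J. J \<subseteq> Asharp a \<inter> {a (N h)..a (N h) + a (N h) div r}
    \<and> h = (\<Sum>i=1..N h. a i) + (\<Sum>x\<in>J. x))" for h
  have "\<forall>\<^sub>F h in sequentially. J h \<subseteq> Asharp a \<inter> {a (N h)..a (N h) + a (N h) div r}
    \<and> h = (\<Sum>i=1..N h. a i) + (\<Sum>x\<in>J h. x)"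
    using ev unfolding J_def by (rule eventually_mono) (rule someI_ex, blast)
  moreover have "{a n..a n + a n div r} \<subseteq> {x. a n \<le> x \<and> real x \<le> (1 + \<epsilon>) * real (a n)}" for n
    using add_div_le_mult[OF r(1), of "a n"] by auto
  ultimately show ?thesis using N by (intro exI[of _ N] exI[of _ J]) (auto elim!: eventually_mono)
qed

end
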